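(* Let $(V,Y_V)$ be a vertex algebra, $(M,Y_M)$ a $V$-module equipped with an operator $d$ satisfying $[d,Y_M(v,z)]=\frac{d}{dz}Y_M(v,z)$, and let $\overline V=V\oplus M$ be the vertex algebra with $$Y(v_1+m_1,z)(v_2+m_2)=Y_V(v_1,z)v_2+Y_M(v_1,z)m_2+e^{zd}Y_M(v_2,-z)m_1 .$$ Let $M_2,M_3$ be $V$-modules and let $\mathcal Y(\cdot,z)$ be an intertwining operator of type $\binom{M_3}{M\ \ M_2}$ (compatible with $d$, i.e. $\mathcal Y(dm,z)=\frac{d}{dz}\mathcal Y(m,z)$) involving only integral powers of $z$, i.e. $\mathcal Y(m,z)m_2\in M_3((z))$. Then $$Y_{M_2\oplus M_3}(v+m,z)(m_2+m_3)=Y(v,z)(m_2+m_3)+\mathcal Y(m,z)m_2\qquad(v\in V,\ m\in M,\ m_i\in M_i)$$ defines a $\overline V$-module structure on $M_2\oplus M_3$.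
   Context: Here $Y(v,z)$ on $M_2\oplus M_3$ denotes the direct sum of the module vertex operators of $M_2$ and $M_3$. In the module structure the elements of $M$ act on $M_2$ via $\mathcal Y$ and act by zero on $M_3$. *)

theory Defs
  imports Complex_Main "HOL-Library.Product_Plus"
begin

text \<open>Formal distributions are encoded by their modes: Y v n w is the coefficient
 v_n w of z^(-n-1) in Y(v,z)w.  Vector spaces over a field k of characteristic 0
 are additive groups with an explicit scalar multiplication.\<close>

definition fsum :: "(nat \<Rightarrow> 'a::comm_monoid_add) \<Rightarrow> 'a" where
  "fsum f = sum f {i. f i \<noteq> 0}"

text \<open>Borcherds (component form of the Jacobi) identity:
 sum_i binom(p,i) (u_(r+i) v)_(p+q-i) w
   = sum_i (-1)^i binom(r,i) (u_(p+r-i) v_(q+i) w - (-1)^r v_(q+r-i) u_(p+i) w).\<close>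
definition borcherds ::
  "('k::field_char_0 \<Rightarrow> 't::ab_group_add \<Rightarrow> 't) \<Rightarrow>
   ('u \<Rightarrow> int \<Rightarrow> 'v \<Rightarrow> 'x) \<Rightarrow> ('x \<Rightarrow> int \<Rightarrow> 'w \<Rightarrow> 't) \<Rightarrow>
   ('v \<Rightarrow> int \<Rightarrow> 'w \<Rightarrow> 'w1) \<Rightarrow> ('u \<Rightarrow> int \<Rightarrow> 'w1 \<Rightarrow> 't) \<Rightarrow>
   ('u \<Rightarrow> int \<Rightarrow> 'w \<Rightarrow> 'w2) \<Rightarrow> ('v \<Rightarrow> int \<Rightarrow> 'w2 \<Rightarrow> 't) \<Rightarrow> bool" where
  "borcherds s A B C D E F \<longleftrightarrow>
    (\<forall>u v w p q r.
      fsum (\<lambda>i. s ((of_int p) gchoose i) (B (A u (r + int i) v) (p + q - int i) w)) =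
      fsum (\<lambda>i. s ((-1) ^ i * ((of_int r) gchoose i)) (D u (p + r - int i) (C v (q + int i) w))
              - s ((-1) ^ i * ((of_int r) gchoose i) * ((-1) powi r)) (F v (q + r - int i) (E u (p + int i) w))))"

definition va_module ::
  "('k::field_char_0 \<Rightarrow> 'v::ab_group_add \<Rightarrow> 'v) \<Rightarrow> ('k \<Rightarrow> 'w::ab_group_add \<Rightarrow> 'w) \<Rightarrow>
   'v \<Rightarrow> ('v \<Rightarrow> int \<Rightarrow> 'v \<Rightarrow> 'v) \<Rightarrow> ('v \<Rightarrow> int \<Rightarrow> 'w \<Rightarrow> 'w) \<Rightarrow> bool" where
  "va_module sV sW one YV YW \<longleftrightarrow>
    Vector_Spaces.vector_space sV \<and> Vector_Spaces.vector_space sW \<and>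
    (\<forall>v n. Vector_Spaces.linear sW sW (YW v n)) \<and>
    (\<forall>n w. Vector_Spaces.linear sV sW (\<lambda>v. YW v n w)) \<and>
    (\<forall>v w. \<exists>N. \<forall>n\<ge>N. YW v n w = 0) \<and>
    (\<forall>n w. YW one n w = (if n = -1 then w else 0)) \<and>
    borcherds sW YV YW YW YW YW YW"

definition vertex_algebra ::
  "('k::field_char_0 \<Rightarrow> 'v::ab_group_add \<Rightarrow> 'v) \<Rightarrow> 'v \<Rightarrow> ('v \<Rightarrow> int \<Rightarrow> 'v \<Rightarrow> 'v) \<Rightarrow> bool" where
  "vertex_algebra sV one YV \<longleftrightarrow>
    va_module sV sV one YV YV \<and>
    (\<forall>v n. n \<ge> 0 \<longrightarrow> YV v n one = 0) \<and> (\<forall>v. YV v (-1) one = v)"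

text \<open>Intertwining operator of type (M3; M M2) with integral powers of z,
 satisfying the d-derivative property  I(d m, z) = d/dz I(m, z),
 i.e. (d m)_n = -n m_(n-1).\<close>
definition intertwining ::
  "('k::field_char_0 \<Rightarrow> 'v::ab_group_add \<Rightarrow> 'v) \<Rightarrow> ('k \<Rightarrow> 'm::ab_group_add \<Rightarrow> 'm) \<Rightarrow>
   ('k \<Rightarrow> 'm2::ab_group_add \<Rightarrow> 'm2) \<Rightarrow> ('k \<Rightarrow> 'm3::ab_group_add \<Rightarrow> 'm3) \<Rightarrow>
   ('v \<Rightarrow> int \<Rightarrow> 'm \<Rightarrow> 'm) \<Rightarrow> ('v \<Rightarrow> int \<Rightarrow> 'm2 \<Rightarrow> 'm2) \<Rightarrow> ('v \<Rightarrow> int \<Rightarrow> 'm3 \<Rightarrow> 'm3) \<Rightarrow>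
   ('m \<Rightarrow> 'm) \<Rightarrow> ('m \<Rightarrow> int \<Rightarrow> 'm2 \<Rightarrow> 'm3) \<Rightarrow> bool" where
  "intertwining sV sM sM2 sM3 YM YM2 YM3 d I \<longleftrightarrow>
    (\<forall>m n. Vector_Spaces.linear sM2 sM3 (I m n)) \<and>
    (\<forall>n w. Vector_Spaces.linear sM sM3 (\<lambda>m. I m n w)) \<and>
    (\<forall>m w. \<exists>N. \<forall>n\<ge>N. I m n w = 0) \<and>
    (\<forall>m n w. I (d m) n w = sM3 (- of_int n) (I m (n - 1) w)) \<and>
    borcherds sM3 YM I I YM3 YM2 I"

definition sprod :: "('k \<Rightarrow> 'a \<Rightarrow> 'a) \<Rightarrow> ('k \<Rightarrow> 'b \<Rightarrow> 'b) \<Rightarrow> 'k \<Rightarrow> 'a \<times> 'b \<Rightarrow> 'a \<times> 'b" where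
  "sprod s1 s2 c x = (s1 c (fst x), s2 c (snd x))"

text \<open>Vertex operator of Vbar = V + M:
 Y(v1+m1,z)(v2+m2) = Y_V(v1,z)v2 + Y_M(v1,z)m2 + e^(zd) Y_M(v2,-z) m1.
 The z^(-n-1) coefficient of the last term is
 sum_j (-1)^(n+j+1)/j! d^j ((v2)_(n+j) m1).\<close>
definition Ybar ::
  "('k::field_char_0 \<Rightarrow> 'm::ab_group_add \<Rightarrow> 'm) \<Rightarrow> ('v \<Rightarrow> int \<Rightarrow> 'v \<Rightarrow> 'v) \<Rightarrow>
   ('v \<Rightarrow> int \<Rightarrow> 'm \<Rightarrow> 'm) \<Rightarrow> ('m \<Rightarrow> 'm) \<Rightarrow> 'v \<times> 'm \<Rightarrow> int \<Rightarrow> 'v \<times> 'm \<Rightarrow> 'v \<times> 'm" where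
  "Ybar sM YV YM d x n y =
     (YV (fst x) n (fst y),
      YM (fst x) n (snd y) +
      fsum (\<lambda>j. sM (((-1) powi (n + int j + 1)) / fact j) ((d ^^ j) (YM (fst y) (n + int j) (snd x)))))"

definition Ysum ::
  "('v \<Rightarrow> int \<Rightarrow> 'm2 \<Rightarrow> 'm2) \<Rightarrow> ('v \<Rightarrow> int \<Rightarrow> 'm3::plus \<Rightarrow> 'm3) \<Rightarrow> ('m \<Rightarrow> int \<Rightarrow> 'm2 \<Rightarrow> 'm3) \<Rightarrow>
   'v \<times> 'm \<Rightarrow> int \<Rightarrow> 'm2 \<times> 'm3 \<Rightarrow> 'm2 \<times> 'm3" where
  "Ysum YM2 YM3 I x n y =
     (YM2 (fst x) n (fst y), YM3 (fst x) n (snd y) + I (snd x) n (fst y))"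

end

theory Submission
  imports Defs "HOL-Computational_Algebra.Formal_Power_Series"
begin

(* Linearity,
   truncation and the vacuum property are inherited componentwise from M2, M3 and I.  For the
   Borcherds identity write u = v1 + m1, v = v2 + m2, w = w2 + w3 and expand both sides: the
   M2-component is the Borcherds identity of M2, and the M3-component splits into three:
     (1) the Borcherds identity of M3 for v1, v2;
     (2) the Borcherds identity of I for v1 acting and m2 intertwining;
     (3) a "skew" Borcherds identity for the right action of v2 on m1 inside V-bar, that is, for
         the modes of e^(zd) Y_M(v2,-z) m1, inserted into I.  By I(d m, z) = d/dz I(m, z), inserting d^j/j! into I
   is a binomial shift of modes; a Vandermonde-type convolution then collapses the resulting
   double sum to the left side of the Borcherds identity of I with p and q exchanged, and that
   identity read in the opposite order is exactly (3). *)

lemmas vs_scale_zero_right = module.scale_zero_right[OF module_iff_vector_space[THEN iffD2]]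
  and vs_scale_right_distrib = module.scale_right_distrib[OF module_iff_vector_space[THEN iffD2]]
  and vs_scale_right_diff_distrib = module.scale_right_diff_distrib[OF module_iff_vector_space[THEN iffD2]]
  and vs_scale_scale = module.scale_scale[OF module_iff_vector_space[THEN iffD2]]
  and vs_scale_one = module.scale_one[OF module_iff_vector_space[THEN iffD2]]
  and vs_scale_minus_left = module.scale_minus_left[OF module_iff_vector_space[THEN iffD2]]
  and vs_scale_sum_right = module.scale_sum_right[OF module_iff_vector_space[THEN iffD2]]
  and vs_scale_sum_left = module.scale_sum_left[OF module_iff_vector_space[THEN iffD2]]

lemmas lin_zero = module_hom.zero[OF module_hom_linearI]
  and lin_add = module_hom.add[OF module_hom_linearI]
  and lin_scale = module_hom.scale[OF module_hom_linearI]
  and lin_sum = module_hom.sum[OF module_hom_linearI]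

lemma funpow_linear_zero:
  assumes "Vector_Spaces.linear s s f"
  shows "(f ^^ j) 0 = 0"
  by (induction j) (simp_all add: lin_zero[OF assms])

(* A nonzero scalar acts injectively; this lets fsum commute with such a scalar. *)
lemma vs_scale_eq_0_iff:
  assumes "vector_space s" and "c \<noteq> 0"
  shows "s c x = 0 \<longleftrightarrow> x = 0"
  using vs_scale_scale[OF assms(1), of "inverse c" c x] assms
  by (auto simp: vs_scale_zero_right vs_scale_one)

lemma vector_space_sprod:
  assumes "vector_space s1" and "vector_space s2"
  shows "vector_space (sprod s1 s2)"
  using assms unfolding vector_space_def sprod_def by simp

lemma fsum_eq_sum:
  assumes "\<forall>n\<ge>N. f n = 0"
  shows "fsum f = sum f {..<N}"
  unfolding fsum_def
proof (rule sum.mono_neutral_left)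
  show "{i. f i \<noteq> 0} \<subseteq> {..<N}"
    using assms by (auto simp: not_less[symmetric])
qed auto

lemma fsum_scale_nonzero:
  assumes "vector_space s" and "c \<noteq> 0"
  shows "fsum (\<lambda>i. s c (f i)) = s c (fsum f)"
  unfolding fsum_def by (simp add: vs_scale_eq_0_iff[OF assms] vs_scale_sum_right[OF assms(1)])

(* fsum is additive and componentwise on finitely supported families: the shape in which the
   modes of Ysum split into a first component and three contributions to the second. *)
lemma fsum_Pair_add3:
  assumes "\<forall>\<^sub>F i in sequentially. f i = 0 \<and> g1 i = 0 \<and> g2 i = 0 \<and> g3 i = 0"
  shows "fsum (\<lambda>i. (f i :: 'a::comm_monoid_add, g1 i + g2 i + g3 i :: 'b::comm_monoid_add))
       = (fsum f, fsum g1 + fsum g2 + fsum g3)"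
proof -
  obtain N where N: "\<forall>n\<ge>N. f n = 0 \<and> g1 n = 0 \<and> g2 n = 0 \<and> g3 n = 0"
    using assms unfolding eventually_sequentially by blast
  have "fsum (\<lambda>i. (f i, g1 i + g2 i + g3 i)) = (\<Sum>i<N. (f i, g1 i + g2 i + g3 i))"
    by (rule fsum_eq_sum) (use N in \<open>auto simp: zero_prod_def\<close>)
  also have "\<dots> = (sum f {..<N}, sum g1 {..<N} + sum g2 {..<N} + sum g3 {..<N})"
    by (simp add: prod_eq_iff fst_sum snd_sum sum.distrib)
  also have "\<dots> = (fsum f, fsum g1 + fsum g2 + fsum g3)"
    using fsum_eq_sum[of N f] fsum_eq_sum[of N g1] fsum_eq_sum[of N g2] fsum_eq_sum[of N g3] N
    by simp
  finally show ?thesis .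
qed

lemma truncated_beyond_shift:
  assumes "\<exists>N. \<forall>n\<ge>N. h n = 0"
  obtains K :: nat where "\<And>n. a + int K \<le> n \<Longrightarrow> h n = 0"
proof -
  obtain N where N: "\<forall>n\<ge>N. h n = 0"
    using assms by blast
  show thesis
  proof (rule that[of "nat (N - a)"])
    fix n assume "a + int (nat (N - a)) \<le> n"
    then have "N \<le> n" by linarith
    then show "h n = 0" using N by blast
  qed
qed

lemma truncated_shift_uniform:
  assumes "\<exists>N. \<forall>n\<ge>N. h n = 0"
  shows "\<forall>\<^sub>F i in sequentially. \<forall>j. h (a + int i + int j) = (0::'a::zero)"
proof -
  obtain K :: nat where K: "\<And>n. a + int K \<le> n \<Longrightarrow> h n = 0"
    using truncated_beyond_shift[OF assms, of a] by blast
  show ?thesis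
    unfolding eventually_sequentially by (rule exI[of _ K]) (auto intro: K)
qed

lemma truncated_shift:
  assumes "\<exists>N. \<forall>n\<ge>N. h n = 0"
  shows "\<forall>\<^sub>F i in sequentially. h (a + int i) = (0::'a::zero)"
  using truncated_shift_uniform[OF assms, of a] by eventually_elim (metis add_0 of_nat_0 add.commute)

lemma gbinomial_alternating_convolution:
  fixes a x :: "'a::field_char_0"
  shows "(\<Sum>i\<le>k. (-1)^i * (a gchoose i) * ((x - of_nat i) gchoose (k - i))) = (x - a) gchoose k"
proof -
  have "(\<Sum>i\<le>k. (-1)^i * (a gchoose i) * ((x - of_nat i) gchoose (k - i)))
     = (\<Sum>i\<le>k. (-1)^k * ((a gchoose i) * ((of_nat k - x - 1) gchoose (k - i))))"
  proof (rule sum.cong)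
    fix i assume "i \<in> {..k}"
    then have ik: "i \<le> k" by simp
    have "(x - of_nat i) gchoose (k - i)
        = (-1)^(k-i) * ((of_nat (k - i) - (x - of_nat i) - 1) gchoose (k - i))"
      by (rule gbinomial_negated_upper)
    also have "of_nat (k - i) - (x - of_nat i) - 1 = (of_nat k - x - 1 :: 'a)"
      using ik by (simp add: of_nat_diff)
    finally have negated: "(x - of_nat i) gchoose (k - i) = (-1)^(k-i) * ((of_nat k - x - 1) gchoose (k - i))" .
    have "(-1::'a)^i * (-1)^(k-i) = (-1)^k"
      using ik by (simp add: power_add[symmetric])
    then show "(-1)^i * (a gchoose i) * ((x - of_nat i) gchoose (k - i))
        = (-1)^k * ((a gchoose i) * ((of_nat k - x - 1) gchoose (k - i)))"
      unfolding negated by (metis (no_types, lifting) mult.assoc mult.left_commute)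
  qed simp
  also have "\<dots> = (-1)^k * (\<Sum>i\<le>k. (a gchoose i) * ((of_nat k - x - 1) gchoose (k - i)))"
    by (simp add: sum_distrib_left)
  also have "(\<Sum>i\<le>k. (a gchoose i) * ((of_nat k - x - 1) gchoose (k - i))) = (a + (of_nat k - x - 1)) gchoose k"
    using gbinomial_Vandermonde[of a "of_nat k - x - 1" k] by (simp add: atMost_atLeast0)
  also have "(-1)^k * ((a + (of_nat k - x - 1)) gchoose k) = (x - a) gchoose k"
    by (subst gbinomial_negated_upper[of "x - a"]) (simp add: algebra_simps)
  finally show ?thesis .
qed

(* The convolution collapses a triangular double sum of vectors to a single binomial sum;
   in the skew identity the double sum comes from expanding e^(zd) inside I. *)
lemma binomial_triangle_collapse:
  fixes s :: "'k::field_char_0 \<Rightarrow> 'a::ab_group_add \<Rightarrow> 'a" and p q :: int and c :: "nat \<Rightarrow> 'a"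
  assumes VS: "vector_space s"
  shows "(\<Sum>i<K. s ((-1)^i * (of_int p gchoose i)) (\<Sum>j<K - i. s (of_int (p + q - int i) gchoose j) (c (i + j))))
       = (\<Sum>k<K. s (of_int q gchoose k) (c k))"
proof -
  define g where "g i j = s ((-1)^i * (of_int p gchoose i) * (of_int (p + q - int i) gchoose j)) (c (i + j))" for i j
  have "(\<Sum>i<K. s ((-1)^i * (of_int p gchoose i)) (\<Sum>j<K - i. s (of_int (p + q - int i) gchoose j) (c (i + j))))
      = (\<Sum>i<K. \<Sum>j<K - i. g i j)"
    by (simp add: g_def vs_scale_sum_right[OF VS] vs_scale_scale[OF VS])
  also have "\<dots> = (\<Sum>(i,j)\<in>{(i,j). i + j < K}. g i j)"
  proof -
    have "{(i,j). i + j < K} = Sigma {..<K} (\<lambda>i. {..<K - i})" by auto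
    then show ?thesis by (simp add: sum.Sigma)
  qed
  also have "\<dots> = (\<Sum>k<K. \<Sum>i\<le>k. g i (k - i))"
    by (rule sum.triangle_reindex)
  also have "\<dots> = (\<Sum>k<K. s (of_int q gchoose k) (c k))"
  proof (rule sum.cong[OF refl])
    fix k
    have "(\<Sum>i\<le>k. g i (k - i))
        = s (\<Sum>i\<le>k. (-1)^i * (of_int p gchoose i) * ((of_int (p + q) - of_nat i) gchoose (k - i))) (c k)"
      by (auto simp: g_def vs_scale_sum_left[OF VS] intro!: sum.cong)
    also have "(\<Sum>i\<le>k. (-1)^i * (of_int p gchoose i) * ((of_int (p + q) - of_nat i) gchoose (k - i)))
        = (of_int q gchoose k :: 'k)"
      using gbinomial_alternating_convolution[of "of_int p" "of_int (p + q)" k] by simp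
    finally show "(\<Sum>i\<le>k. g i (k - i)) = s (of_int q gchoose k) (c k)" .
  qed
  finally show ?thesis .
qed

lemma intertwining_d_power:
  assumes VS3: "vector_space sM3"
    and I_d: "\<forall>m n w. I (d m) n w = sM3 (- of_int n) (I m (n - 1) w)"
  shows "I ((d^^j) x) k w = sM3 ((-1)^j * fact j * (of_int k gchoose j)) (I x (k - int j) w)"
proof (induction j arbitrary: k)
  case 0
  then show ?case by (simp add: vs_scale_one[OF VS3])
next
  case (Suc j)
  have "I ((d^^Suc j) x) k w = sM3 (- of_int k) (I ((d^^j) x) (k - 1) w)"
    using I_d by simp
  also have "\<dots> = sM3 (- of_int k * ((-1)^j * fact j * (of_int (k - 1) gchoose j))) (I x (k - 1 - int j) w)"
    by (simp add: Suc vs_scale_scale[OF VS3])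
  also have "- of_int k * ((-1)^j * fact j * (of_int (k - 1) gchoose j))
      = ((-1)^Suc j * fact (Suc j) * (of_int k gchoose Suc j) :: 'a)"
  proof -
    have absorption: "of_int k * (of_int (k - 1) gchoose j) = of_nat (Suc j) * ((of_int k :: 'a) gchoose Suc j)"
      using gbinomial_absorption[of j "of_int k :: 'a"] by simp
    have "- of_int k * ((-1)^j * fact j * (of_int (k - 1) gchoose j))
        = - ((-1)^j * fact j * (of_int k * (of_int (k - 1) gchoose j)) :: 'a)"
      by (simp add: algebra_simps)
    also have "\<dots> = - ((-1)^j * fact j * (of_nat (Suc j) * (of_int k gchoose Suc j)))"
      by (simp only: absorption)
    also have "\<dots> = (-1)^Suc j * fact (Suc j) * (of_int k gchoose Suc j)"
      by (simp only: fact_Suc power_Suc) (simp add: algebra_simps)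
    finally show ?thesis .
  qed
  finally show ?case by (simp add: algebra_simps)
qed

definition borcherds_left ::
  "('k::field_char_0 \<Rightarrow> 't::ab_group_add \<Rightarrow> 't) \<Rightarrow> ('u \<Rightarrow> int \<Rightarrow> 'v \<Rightarrow> 'x) \<Rightarrow>
   ('x \<Rightarrow> int \<Rightarrow> 'w \<Rightarrow> 't) \<Rightarrow> 'u \<Rightarrow> 'v \<Rightarrow> 'w \<Rightarrow> int \<Rightarrow> int \<Rightarrow> int \<Rightarrow> nat \<Rightarrow> 't" where
  "borcherds_left s A B u v w p q r =
     (\<lambda>i. s (of_int p gchoose i) (B (A u (r + int i) v) (p + q - int i) w))"

definition borcherds_right ::
  "('k::field_char_0 \<Rightarrow> 't::ab_group_add \<Rightarrow> 't) \<Rightarrow> ('v \<Rightarrow> int \<Rightarrow> 'w \<Rightarrow> 'w1) \<Rightarrow>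
   ('u \<Rightarrow> int \<Rightarrow> 'w1 \<Rightarrow> 't) \<Rightarrow> ('u \<Rightarrow> int \<Rightarrow> 'w \<Rightarrow> 'w2) \<Rightarrow> ('v \<Rightarrow> int \<Rightarrow> 'w2 \<Rightarrow> 't) \<Rightarrow>
   'u \<Rightarrow> 'v \<Rightarrow> 'w \<Rightarrow> int \<Rightarrow> int \<Rightarrow> int \<Rightarrow> nat \<Rightarrow> 't" where
  "borcherds_right s C D E F u v w p q r =
     (\<lambda>i. s ((-1)^i * (of_int r gchoose i)) (D u (p + r - int i) (C v (q + int i) w))
        - s ((-1)^i * (of_int r gchoose i) * ((-1) powi r)) (F v (q + r - int i) (E u (p + int i) w)))"

lemma borcherds_iff:
  "borcherds s A B C D E F \<longleftrightarrow>
     (\<forall>u v w p q r. fsum (borcherds_left s A B u v w p q r) = fsum (borcherds_right s C D E F u v w p q r))"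
  by (simp add: borcherds_def borcherds_left_def borcherds_right_def)

(* The Borcherds identity read with its right-hand side in the opposite order: multiplying it by
   -(-1)^r exchanges the two products on the right, and with them the roles of u and v. *)
lemma borcherds_opposite:
  assumes VS: "vector_space s" and B: "borcherds s A B C D E F"
  shows "fsum (borcherds_right s E F C D v u w q p r)
       = s (- ((-1) powi r)) (fsum (borcherds_left s A B u v w p q r))"
proof -
  define \<sigma> :: 'a where "\<sigma> = (-1) powi r"
  have \<sigma>\<sigma>: "\<sigma> * \<sigma> = 1" by (simp add: \<sigma>_def)
  then have \<sigma>_nz: "- \<sigma> \<noteq> 0" by auto
  have swap: "s e z - s (e * \<sigma>) y = s (- \<sigma>) (s e y - s (e * \<sigma>) z)" for e y z
  proof -
    have "s (- \<sigma>) (s e y - s (e * \<sigma>) z) = s (- (\<sigma> * e)) y - s (- (\<sigma> * (e * \<sigma>))) z"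
      by (simp add: vs_scale_right_diff_distrib[OF VS] vs_scale_scale[OF VS])
    also have "- (\<sigma> * (e * \<sigma>)) = - e" using \<sigma>\<sigma> by (simp add: algebra_simps)
    finally show ?thesis by (simp add: vs_scale_minus_left[OF VS] mult.commute)
  qed
  have "fsum (borcherds_right s E F C D v u w q p r)
      = fsum (\<lambda>i. s (- \<sigma>) (borcherds_right s C D E F u v w p q r i))"
    unfolding borcherds_right_def \<sigma>_def
    by (rule arg_cong[where f = fsum], rule ext, rule swap[unfolded \<sigma>_def])
  also have "\<dots> = s (- \<sigma>) (fsum (borcherds_left s A B u v w p q r))"
    using B by (simp add: fsum_scale_nonzero[OF VS \<sigma>_nz] borcherds_iff)
  finally show ?thesis unfolding \<sigma>_def .
qed

(* The z^(-n-1) coefficient of e^(zd) Y_M(v,-z) m: the mode by which v \<in> V acts from the right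
   on m \<in> M inside V-bar. *)
definition skew_mode ::
  "('k::field_char_0 \<Rightarrow> 'm::ab_group_add \<Rightarrow> 'm) \<Rightarrow> ('v \<Rightarrow> int \<Rightarrow> 'm \<Rightarrow> 'm) \<Rightarrow> ('m \<Rightarrow> 'm) \<Rightarrow>
   'v \<Rightarrow> 'm \<Rightarrow> int \<Rightarrow> 'm" where
  "skew_mode sM YM d v m n =
     fsum (\<lambda>j. sM ((-1) powi (n + int j + 1) / fact j) ((d ^^ j) (YM v (n + int j) m)))"

lemma Ybar_skew_mode:
  "Ybar sM YV YM d x n y
     = (YV (fst x) n (fst y), YM (fst x) n (snd y) + skew_mode sM YM d (fst y) (snd x) n)"
  by (simp add: Ybar_def skew_mode_def)

(* Inside an intertwining operator, d^j/j! acts on modes by a binomial shift, so a skew mode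
   becomes a finite binomial combination of the modes of the elements v_n m. *)
lemma intertwining_skew_mode:
  fixes sM :: "'k::field_char_0 \<Rightarrow> 'm::ab_group_add \<Rightarrow> 'm"
    and sM3 :: "'k \<Rightarrow> 'm3::ab_group_add \<Rightarrow> 'm3"
  assumes VSM: "vector_space sM" and VS3: "vector_space sM3"
    and d_lin: "Vector_Spaces.linear sM sM d"
    and I_lin: "\<And>n w. Vector_Spaces.linear sM sM3 (\<lambda>m. I m n w)"
    and I_d: "\<forall>m n w. I (d m) n w = sM3 (- of_int n) (I m (n - 1) w)"
    and K: "\<And>n. r + int K \<le> n \<Longrightarrow> YM v n m = 0"
  shows "I (skew_mode sM YM d v m (r + int i)) k w
       = sM3 (- ((-1) powi r) * (-1)^i)
           (\<Sum>j<K - i. sM3 (of_int k gchoose j) (I (YM v (r + int (i + j)) m) (k - int j) w))"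
proof -
  define a :: "nat \<Rightarrow> 'k" where "a j = (-1) powi (r + int i + int j + 1) / fact j" for j
  have "skew_mode sM YM d v m (r + int i) = (\<Sum>j<K - i. sM (a j) ((d ^^ j) (YM v (r + int i + int j) m)))"
    unfolding skew_mode_def a_def
    by (rule fsum_eq_sum) (auto simp: K funpow_linear_zero[OF d_lin] vs_scale_zero_right[OF VSM])
  then have "I (skew_mode sM YM d v m (r + int i)) k w
      = (\<Sum>j<K - i. sM3 (a j) (I ((d ^^ j) (YM v (r + int i + int j) m)) k w))"
    by (simp add: lin_sum[OF I_lin] lin_scale[OF I_lin])
  also have "\<dots> = (\<Sum>j<K - i. sM3 (- ((-1) powi r) * (-1)^i)
                      (sM3 (of_int k gchoose j) (I (YM v (r + int (i + j)) m) (k - int j) w)))"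
  proof (rule sum.cong[OF refl])
    fix j
    have sign: "(-1::'k) powi (r + int i + int j + 1) = - ((-1) powi r) * (-1)^i * (-1)^j"
      by (simp add: power_int_add)
    have "(-1::'k)^j * (-1)^j = 1"
      by (simp flip: power_add)
    then have "a j * ((-1)^j * fact j * (of_int k gchoose j)) = - ((-1) powi r) * (-1)^i * (of_int k gchoose j)"
      unfolding a_def sign by (simp add: field_simps)
    then show "sM3 (a j) (I ((d ^^ j) (YM v (r + int i + int j) m)) k w)
        = sM3 (- ((-1) powi r) * (-1)^i) (sM3 (of_int k gchoose j) (I (YM v (r + int (i + j)) m) (k - int j) w))"
      by (simp add: intertwining_d_power[OF VS3 I_d] vs_scale_scale[OF VS3] add.assoc)
  qed
  finally show ?thesis by (simp add: vs_scale_sum_right[OF VS3])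
qed

(* After expanding the skew modes,
   the binomial collapse reduces it to the Borcherds identity of I with p and q exchanged,
   read in the opposite order. *)
lemma intertwining_skew_borcherds:
  fixes sM :: "'k::field_char_0 \<Rightarrow> 'm::ab_group_add \<Rightarrow> 'm"
    and sM3 :: "'k \<Rightarrow> 'm3::ab_group_add \<Rightarrow> 'm3"
  assumes VSM: "vector_space sM" and VS3: "vector_space sM3"
    and d_lin: "Vector_Spaces.linear sM sM d"
    and YM_trunc: "\<And>v m. \<exists>N. \<forall>n\<ge>N. YM v n m = 0"
    and I: "intertwining sV sM sM2 sM3 YM YM2 YM3 d I"
  shows "borcherds sM3 (\<lambda>m n v. skew_mode sM YM d v m n) I YM2 I I YM3"
  unfolding borcherds_iff
proof (intro allI)
  fix m v w p q r
  have I_lin: "\<And>n w. Vector_Spaces.linear sM sM3 (\<lambda>m. I m n w)"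
    and I_d: "\<forall>m n w. I (d m) n w = sM3 (- of_int n) (I m (n - 1) w)"
    and I_borcherds: "borcherds sM3 YM I I YM3 YM2 I"
    using I unfolding intertwining_def by blast+
  define \<sigma> :: 'k where "\<sigma> = (-1) powi r"
  obtain K :: nat where K: "\<And>n. r + int K \<le> n \<Longrightarrow> YM v n m = 0"
    using truncated_beyond_shift[OF YM_trunc, of r] by blast
  define c where "c l = I (YM v (r + int l) m) (p + q - int l) w" for l :: nat
  note skew = intertwining_skew_mode[where I = I and YM = YM and v = v and m = m,
      OF VSM VS3 d_lin I_lin I_d K]
  have "fsum (borcherds_left sM3 (\<lambda>m n v. skew_mode sM YM d v m n) I m v w p q r)
      = (\<Sum>i<K. sM3 (of_int p gchoose i) (I (skew_mode sM YM d v m (r + int i)) (p + q - int i) w))"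
    unfolding borcherds_left_def by (rule fsum_eq_sum) (auto simp: skew vs_scale_zero_right[OF VS3])
  also have "\<dots> = (\<Sum>i<K. sM3 (- \<sigma>) (sM3 ((-1)^i * (of_int p gchoose i))
                    (\<Sum>j<K - i. sM3 (of_int (p + q - int i) gchoose j) (c (i + j)))))"
    by (rule sum.cong[OF refl]) (simp add: skew c_def \<sigma>_def vs_scale_scale[OF VS3] mult_ac diff_diff_eq)
  also have "\<dots> = sM3 (- \<sigma>) (\<Sum>i<K. sM3 ((-1)^i * (of_int p gchoose i))
                    (\<Sum>j<K - i. sM3 (of_int (p + q - int i) gchoose j) (c (i + j))))"
    by (simp only: vs_scale_sum_right[OF VS3])
  also have "\<dots> = sM3 (- \<sigma>) (\<Sum>k<K. sM3 (of_int q gchoose k) (c k))"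
    by (simp only: binomial_triangle_collapse[OF VS3])
  also have "(\<Sum>k<K. sM3 (of_int q gchoose k) (c k)) = fsum (borcherds_left sM3 YM I v m w q p r)"
  proof -
    have "fsum (borcherds_left sM3 YM I v m w q p r) = (\<Sum>k<K. borcherds_left sM3 YM I v m w q p r k)"
      unfolding borcherds_left_def
      by (rule fsum_eq_sum) (auto simp: K lin_zero[OF I_lin] vs_scale_zero_right[OF VS3])
    then show ?thesis by (simp add: borcherds_left_def c_def add.commute)
  qed
  finally show "fsum (borcherds_left sM3 (\<lambda>m n v. skew_mode sM YM d v m n) I m v w p q r)
      = fsum (borcherds_right sM3 YM2 I I YM3 m v w p q r)"
    using borcherds_opposite[OF VS3 I_borcherds, of m v w p q r] unfolding \<sigma>_def by simp
qed

locale sum_module_setting =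
  fixes sV :: "'k::field_char_0 \<Rightarrow> 'v::ab_group_add \<Rightarrow> 'v"
    and sM :: "'k \<Rightarrow> 'm::ab_group_add \<Rightarrow> 'm"
    and sM2 :: "'k \<Rightarrow> 'm2::ab_group_add \<Rightarrow> 'm2"
    and sM3 :: "'k \<Rightarrow> 'm3::ab_group_add \<Rightarrow> 'm3"
    and one :: 'v
    and YV :: "'v \<Rightarrow> int \<Rightarrow> 'v \<Rightarrow> 'v"
    and YM :: "'v \<Rightarrow> int \<Rightarrow> 'm \<Rightarrow> 'm"
    and YM2 :: "'v \<Rightarrow> int \<Rightarrow> 'm2 \<Rightarrow> 'm2"
    and YM3 :: "'v \<Rightarrow> int \<Rightarrow> 'm3 \<Rightarrow> 'm3"
    and d :: "'m \<Rightarrow> 'm"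
    and I :: "'m \<Rightarrow> int \<Rightarrow> 'm2 \<Rightarrow> 'm3"
  assumes VA: "vertex_algebra sV one YV"
    and M: "va_module sV sM one YV YM"
    and d_lin: "Vector_Spaces.linear sM sM d"
    and M2: "va_module sV sM2 one YV YM2"
    and M3: "va_module sV sM3 one YV YM3"
    and I: "intertwining sV sM sM2 sM3 YM YM2 YM3 d I"
begin

lemma VSV: "vector_space sV"
  and YV_trunc: "\<And>v w. \<exists>N. \<forall>n\<ge>N. YV v n w = 0"
  using VA unfolding vertex_algebra_def va_module_def by blast+

lemma VSM: "vector_space sM"
  and YM_trunc: "\<And>v w. \<exists>N. \<forall>n\<ge>N. YM v n w = 0"
  using M unfolding va_module_def by blast+

lemma VS2: "vector_space sM2"
  and YM2_lin: "\<And>v n. Vector_Spaces.linear sM2 sM2 (YM2 v n)"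
  and YM2_lin_left: "\<And>n w. Vector_Spaces.linear sV sM2 (\<lambda>v. YM2 v n w)"
  and YM2_trunc: "\<And>v w. \<exists>N. \<forall>n\<ge>N. YM2 v n w = 0"
  and YM2_vacuum: "\<And>n w. YM2 one n w = (if n = -1 then w else 0)"
  and YM2_borcherds: "borcherds sM2 YV YM2 YM2 YM2 YM2 YM2"
  using M2 unfolding va_module_def by blast+

lemma VS3: "vector_space sM3"
  and YM3_lin: "\<And>v n. Vector_Spaces.linear sM3 sM3 (YM3 v n)"
  and YM3_lin_left: "\<And>n w. Vector_Spaces.linear sV sM3 (\<lambda>v. YM3 v n w)"
  and YM3_trunc: "\<And>v w. \<exists>N. \<forall>n\<ge>N. YM3 v n w = 0"
  and YM3_vacuum: "\<And>n w. YM3 one n w = (if n = -1 then w else 0)"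
  and YM3_borcherds: "borcherds sM3 YV YM3 YM3 YM3 YM3 YM3"
  using M3 unfolding va_module_def by blast+

lemma I_lin: "\<And>m n. Vector_Spaces.linear sM2 sM3 (I m n)"
  and I_lin_left: "\<And>n w. Vector_Spaces.linear sM sM3 (\<lambda>m. I m n w)"
  and I_trunc: "\<And>m w. \<exists>N. \<forall>n\<ge>N. I m n w = 0"
  and I_borcherds: "borcherds sM3 YM I I YM3 YM2 I"
  using I unfolding intertwining_def by blast+

lemmas zero_modes = lin_zero[OF YM2_lin] lin_zero[OF YM2_lin_left] lin_zero[OF YM3_lin]
  lin_zero[OF YM3_lin_left] lin_zero[OF I_lin] lin_zero[OF I_lin_left]
  vs_scale_zero_right[OF VS2] vs_scale_zero_right[OF VS3]

lemma Ysum_linear_right: "Vector_Spaces.linear (sprod sM2 sM3) (sprod sM2 sM3) (Ysum YM2 YM3 I x n)"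
  unfolding Vector_Spaces.linear_iff
  by (simp add: vector_space_sprod[OF VS2 VS3] Ysum_def sprod_def lin_add[OF YM2_lin] lin_add[OF YM3_lin]
      lin_add[OF I_lin] lin_scale[OF YM2_lin] lin_scale[OF YM3_lin] lin_scale[OF I_lin]
      vs_scale_right_distrib[OF VS3])

lemma Ysum_linear_left: "Vector_Spaces.linear (sprod sV sM) (sprod sM2 sM3) (\<lambda>x. Ysum YM2 YM3 I x n w)"
  unfolding Vector_Spaces.linear_iff
  by (simp add: vector_space_sprod[OF VS2 VS3] vector_space_sprod[OF VSV VSM] Ysum_def sprod_def
      lin_add[OF YM2_lin_left] lin_add[OF YM3_lin_left] lin_add[OF I_lin_left]
      lin_scale[OF YM2_lin_left] lin_scale[OF YM3_lin_left] lin_scale[OF I_lin_left]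
      vs_scale_right_distrib[OF VS3])

lemma Ysum_truncated: "\<exists>N. \<forall>n\<ge>N. Ysum YM2 YM3 I x n w = 0"
proof -
  obtain N2 where N2: "\<forall>n\<ge>N2. YM2 (fst x) n (fst w) = 0" using YM2_trunc by blast
  obtain N3 where N3: "\<forall>n\<ge>N3. YM3 (fst x) n (snd w) = 0" using YM3_trunc by blast
  obtain NI where NI: "\<forall>n\<ge>NI. I (snd x) n (fst w) = 0" using I_trunc by blast
  show ?thesis
    by (rule exI[of _ "max N2 (max N3 NI)"]) (simp add: Ysum_def N2 N3 NI zero_prod_def)
qed

lemma Ysum_vacuum: "Ysum YM2 YM3 I (one, 0) n w = (if n = -1 then w else 0)"
  by (simp add: Ysum_def YM2_vacuum YM3_vacuum zero_modes zero_prod_def)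

(* The Borcherds identity of M2 + M3 over V-bar splits componentwise into the Borcherds
   identities of M2, M3 and I and the skew identity for the right action of V on M. *)
lemma Ysum_borcherds:
  "borcherds (sprod sM2 sM3) (Ybar sM YV YM d) (Ysum YM2 YM3 I) (Ysum YM2 YM3 I)
     (Ysum YM2 YM3 I) (Ysum YM2 YM3 I) (Ysum YM2 YM3 I)"
  unfolding borcherds_iff
proof (intro allI)
  fix u v :: "'v \<times> 'm" and w :: "'m2 \<times> 'm3" and p q r :: int
  obtain v1 m1 where u: "u = (v1, m1)" by (cases u)
  obtain v2 m2 where v: "v = (v2, m2)" by (cases v)
  obtain w2 w3 where w: "w = (w2, w3)" by (cases w)
  let ?skew = "\<lambda>m n v. skew_mode sM YM d v m n"
  let ?L2 = "borcherds_left sM2 YV YM2 v1 v2 w2 p q r"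
  let ?L3 = "borcherds_left sM3 YV YM3 v1 v2 w3 p q r"
  let ?LI = "borcherds_left sM3 YM I v1 m2 w2 p q r"
  let ?LS = "borcherds_left sM3 ?skew I m1 v2 w2 p q r"
  let ?R2 = "borcherds_right sM2 YM2 YM2 YM2 YM2 v1 v2 w2 p q r"
  let ?R3 = "borcherds_right sM3 YM3 YM3 YM3 YM3 v1 v2 w3 p q r"
  let ?RI = "borcherds_right sM3 I YM3 YM2 I v1 m2 w2 p q r"
  let ?RS = "borcherds_right sM3 YM2 I I YM3 m1 v2 w2 p q r"
  have left: "borcherds_left (sprod sM2 sM3) (Ybar sM YV YM d) (Ysum YM2 YM3 I) u v w p q r
      = (\<lambda>i. (?L2 i, ?L3 i + ?LI i + ?LS i))"
    unfolding borcherds_left_def sprod_def Ysum_def Ybar_skew_mode u v w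
    by (simp add: lin_add[OF I_lin_left] vs_scale_right_distrib[OF VS3] add.assoc)
  have right: "borcherds_right (sprod sM2 sM3) (Ysum YM2 YM3 I) (Ysum YM2 YM3 I) (Ysum YM2 YM3 I)
      (Ysum YM2 YM3 I) u v w p q r = (\<lambda>i. (?R2 i, ?R3 i + ?RI i + ?RS i))"
  proof (rule ext)
    fix i
    show "borcherds_right (sprod sM2 sM3) (Ysum YM2 YM3 I) (Ysum YM2 YM3 I) (Ysum YM2 YM3 I)
      (Ysum YM2 YM3 I) u v w p q r i = (?R2 i, ?R3 i + ?RI i + ?RS i)"
      unfolding borcherds_right_def sprod_def Ysum_def u v w
      by (simp add: lin_add[OF YM3_lin] vs_scale_right_distrib[OF VS3] algebra_simps)
  qed
  have "\<forall>\<^sub>F i in sequentially. ?L2 i = 0 \<and> ?L3 i = 0 \<and> ?LI i = 0 \<and> ?LS i = 0"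
    using truncated_shift[OF YV_trunc[of v1 v2], of r] truncated_shift[OF YM_trunc[of v1 m2], of r]
      truncated_shift_uniform[OF YM_trunc[of v2 m1], of r]
    by eventually_elim (simp add: borcherds_left_def skew_mode_def zero_modes
        funpow_linear_zero[OF d_lin] vs_scale_zero_right[OF VSM] fsum_def)
  moreover have "\<forall>\<^sub>F i in sequentially. ?R2 i = 0 \<and> ?R3 i = 0 \<and> ?RI i = 0 \<and> ?RS i = 0"
    using truncated_shift[OF YM2_trunc[of v2 w2], of q] truncated_shift[OF YM2_trunc[of v1 w2], of p]
      truncated_shift[OF YM3_trunc[of v2 w3], of q] truncated_shift[OF YM3_trunc[of v1 w3], of p]
      truncated_shift[OF I_trunc[of m2 w2], of q] truncated_shift[OF I_trunc[of m1 w2], of p]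
    by eventually_elim (simp add: borcherds_right_def zero_modes)
  moreover note YM2_borcherds[unfolded borcherds_iff, rule_format, of v1 v2 w2 p q r]
    YM3_borcherds[unfolded borcherds_iff, rule_format, of v1 v2 w3 p q r]
    I_borcherds[unfolded borcherds_iff, rule_format, of v1 m2 w2 p q r]
    intertwining_skew_borcherds[OF VSM VS3 d_lin YM_trunc I, unfolded borcherds_iff, rule_format,
      of m1 v2 w2 p q r]
  ultimately show "fsum (borcherds_left (sprod sM2 sM3) (Ybar sM YV YM d) (Ysum YM2 YM3 I) u v w p q r)
      = fsum (borcherds_right (sprod sM2 sM3) (Ysum YM2 YM3 I) (Ysum YM2 YM3 I) (Ysum YM2 YM3 I)
          (Ysum YM2 YM3 I) u v w p q r)"
    unfolding left right by (simp add: fsum_Pair_add3)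
qed

theorem va_module_Ysum:
  "va_module (sprod sV sM) (sprod sM2 sM3) (one, 0) (Ybar sM YV YM d) (Ysum YM2 YM3 I)"
  unfolding va_module_def
  using vector_space_sprod[OF VSV VSM] vector_space_sprod[OF VS2 VS3] Ysum_linear_right
    Ysum_linear_left Ysum_truncated Ysum_vacuum Ysum_borcherds
  by blast

end

theorem lemma2:
  fixes sV :: "'k::field_char_0 \<Rightarrow> 'v::ab_group_add \<Rightarrow> 'v"
    and sM :: "'k \<Rightarrow> 'm::ab_group_add \<Rightarrow> 'm"
    and sM2 :: "'k \<Rightarrow> 'm2::ab_group_add \<Rightarrow> 'm2"
    and sM3 :: "'k \<Rightarrow> 'm3::ab_group_add \<Rightarrow> 'm3"
    and one :: 'v
    and YV :: "'v \<Rightarrow> int \<Rightarrow> 'v \<Rightarrow> 'v"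
    and YM :: "'v \<Rightarrow> int \<Rightarrow> 'm \<Rightarrow> 'm"
    and YM2 :: "'v \<Rightarrow> int \<Rightarrow> 'm2 \<Rightarrow> 'm2"
    and YM3 :: "'v \<Rightarrow> int \<Rightarrow> 'm3 \<Rightarrow> 'm3"
    and d :: "'m \<Rightarrow> 'm"
    and I :: "'m \<Rightarrow> int \<Rightarrow> 'm2 \<Rightarrow> 'm3"
  assumes VA: "vertex_algebra sV one YV"
    and M: "va_module sV sM one YV YM"
    and d_lin: "Vector_Spaces.linear sM sM d"
    and d_comm: "\<forall>v n m. d (YM v n m) - YM v n (d m) = sM (- of_int n) (YM v (n - 1) m)"
    and M2: "va_module sV sM2 one YV YM2"
    and M3: "va_module sV sM3 one YV YM3"
    and I: "intertwining sV sM sM2 sM3 YM YM2 YM3 d I"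
  shows "va_module (sprod sV sM) (sprod sM2 sM3) (one, 0) (Ybar sM YV YM d) (Ysum YM2 YM3 I)"
proof -
  interpret sum_module_setting sV sM sM2 sM3 one YV YM YM2 YM3 d I
    by (rule sum_module_setting.intro[OF VA M d_lin M2 M3 I])
  show ?thesis by (rule va_module_Ysum)
qed

end
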